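(* Let $p$ be a prime and $e\geq 2$ an integer. For each integer $r\geq 2$ let $S(p,e,r)$ be the smallest set of positive integers such that $r\in S$, $n\in S$ whenever $n^e\in S$, and $(n+p)^e\in S$ whenever $n\in S$. Let $V=\bigcup_{r\geq 2}S(p,e,r)$ and let $\Gamma(p,e)$ be the directed graph on $V$ with up-edges $(n,(n+p)^e)$ and down-edges $(n^e,n)$ for $n\in V$. Then no path in $\Gamma(p,e)$ contains $UUDD$ as a subpath; that is, there do not exist vertices $x,a,z,b,y\in V$ with $a=(x+p)^e$, $z=(a+p)^e$, $z=b^e$ and $b=y^e$.
   Context: Each edge of a path is labelled $U$ if it is an up-edge and $D$ if it is a down-edge; a path contains $UUDD$ as a subpath if it has four consecutive edges labelled $U,U,D,D$. *)

theory Defs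
  imports "HOL-Computational_Algebra.Primes"
begin

text \<open>All elements are automatically positive since r \<ge> 2 is positive.\<close>
inductive_set Sset :: "nat \<Rightarrow> nat \<Rightarrow> nat \<Rightarrow> nat set"
  for p :: nat and e :: nat and r :: nat where
  base: "r \<in> Sset p e r"
| root: "n ^ e \<in> Sset p e r \<Longrightarrow> n \<in> Sset p e r"
| up: "n \<in> Sset p e r \<Longrightarrow> (n + p) ^ e \<in> Sset p e r"

definition Vset :: "nat \<Rightarrow> nat \<Rightarrow> nat set" where
  "Vset p e = (\<Union>r\<in>{2..}. Sset p e r)"

end

theory Submission
  imports Defs
begin

text \<open>An up-up-down-down path x, a = (x+p)^e, z = (a+p)^e = b^e, b = y^e forces b = a + p,
  i.e. (x+p)^e + p = y^e. But 0 < p \<le> x + p, and the e-th powers following m^e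
  start only at (m+1)^e \<ge> m^e + m + 1, so m^e + p with m = x + p is no e-th power.
  Neither membership in V nor the primality of p (beyond p > 0) plays a role.\<close>

lemma Suc_power_ge_power_plus:
  fixes m e :: nat
  assumes "2 \<le> e"
  shows "m ^ e + m + 1 \<le> (m + 1) ^ e"
proof -
  obtain k where e: "e = Suc k" and "1 \<le> k"
    using assms by (metis Suc_le_D Suc_le_mono one_add_one plus_1_eq_Suc)
  have "m ^ e = m ^ k * m" by (simp add: e mult.commute)
  also have "\<dots> \<le> (m + 1) ^ k * m" by (simp add: power_mono)
  finally have "m ^ e + (m + 1) \<le> (m + 1) ^ k * m + (m + 1) ^ k"
    using \<open>1 \<le> k\<close> power_increasing[of 1 k "m + 1"] by simp
  also have "\<dots> = (m + 1) ^ e" by (simp add: e algebra_simps)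
  finally show ?thesis by simp
qed

lemma power_plus_not_power:
  fixes m d y e :: nat
  assumes "2 \<le> e" and "0 < d" and "d \<le> m"
  shows "m ^ e + d \<noteq> y ^ e"
proof
  assume eq: "m ^ e + d = y ^ e"
  then have "m ^ e < y ^ e" using \<open>0 < d\<close> by linarith
  then have "m + 1 \<le> y" using power_less_imp_less_base by fastforce
  then have "(m + 1) ^ e \<le> y ^ e" by (rule power_mono) simp
  with eq \<open>d \<le> m\<close> Suc_power_ge_power_plus[OF \<open>2 \<le> e\<close>, of m] show False by linarith
qed

theorem theorem24:
  fixes p e :: nat
  assumes "prime p" and "e \<ge> 2"
  shows "\<not> (\<exists>x a z b y. x \<in> Vset p e \<and> a \<in> Vset p e \<and> z \<in> Vset p e \<and>
              b \<in> Vset p e \<and> y \<in> Vset p e \<and>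
              a = (x + p) ^ e \<and> z = (a + p) ^ e \<and> z = b ^ e \<and> b = y ^ e)"
proof
  assume "\<exists>x a z b y. x \<in> Vset p e \<and> a \<in> Vset p e \<and> z \<in> Vset p e \<and>
              b \<in> Vset p e \<and> y \<in> Vset p e \<and>
              a = (x + p) ^ e \<and> z = (a + p) ^ e \<and> z = b ^ e \<and> b = y ^ e"
  then obtain x a b y where a: "a = (x + p) ^ e" and ab: "(a + p) ^ e = b ^ e" and b: "b = y ^ e"
    by blast
  have "a + p = b"
    using ab \<open>e \<ge> 2\<close> by (simp add: power_eq_iff_eq_base)
  then have "(x + p) ^ e + p = y ^ e" using a b by simp
  moreover have "0 < p" using \<open>prime p\<close> prime_gt_0_nat by blast
  ultimately show False
    using power_plus_not_power[OF \<open>e \<ge> 2\<close>, of p "x + p" y] by simp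
qed

end
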